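(* Let $m,K$ be positive integers and $b_1,\dots,b_{3m}$ positive integers with $K/4<b_i<K/2$ and $\sum_i b_i=mK$. Set $W=100(5m)^2K$, $a_i=b_i+W$, $L=3W+K$, $\epsilon=1/(400(5m)^2)$, $h=\lfloor 4\epsilon L\rfloor$, $H=L+h$, $\beta_0=h/H$, $\beta_i=a_i/H-1/3$ ($1\le i\le 3m$). Let $X$ be the multiset consisting of $a_1,\dots,a_{3m}$, $m$ copies of $-H$ and $m$ copies of $h$, and let $T_{\min}$ be a minimum-cost addition tree over $X$. If a node $z$ of $T_{\min}$ has value of the form $(1/3+\lambda)H$, then $z$ is a leaf.
   Context: An addition tree over a multiset $X$ is a full binary tree whose leaves are labeled by the elements of $X$ (each used once), each internal node having value equal to the sum of its children's values; its cost is the sum of the absolute values of its internal nodes, and $T_{\min}$ minimizes the cost. A "$\lambda$" denotes a sum of at most $5m$ numbers each of the form $\pm\beta_i$ with $0\le i\le 3m$. Every node value can be written as $(N/3+\lambda)H$ with $N$ an integer; since $|\lambda|\le 1/(500m)$, $N$ and the value of $\lambda$ are uniquely determined. *)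

theory Defs
  imports Complex_Main "HOL-Library.Multiset"
begin

datatype atree = Leaf int | Node atree atree

fun aval :: "atree \<Rightarrow> int" where
  "aval (Leaf x) = x"
| "aval (Node l r) = aval l + aval r"

fun leaves :: "atree \<Rightarrow> int multiset" where
  "leaves (Leaf x) = {#x#}"
| "leaves (Node l r) = leaves l + leaves r"

fun cost :: "atree \<Rightarrow> int" where
  "cost (Leaf x) = 0"
| "cost (Node l r) = \<bar>aval l + aval r\<bar> + cost l + cost r"

text \<open>Nodes of a tree, each represented by the subtree rooted at it.\<close>
fun nodes :: "atree \<Rightarrow> atree set" where
  "nodes (Leaf x) = {Leaf x}"
| "nodes (Node l r) = insert (Node l r) (nodes l \<union> nodes r)"

definition is_leaf :: "atree \<Rightarrow> bool" where
  "is_leaf t \<longleftrightarrow> (\<exists>x. t = Leaf x)"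

definition addition_tree_over :: "int multiset \<Rightarrow> atree \<Rightarrow> bool" where
  "addition_tree_over X T \<longleftrightarrow> leaves T = X"

definition min_cost_tree :: "int multiset \<Rightarrow> atree \<Rightarrow> bool" where
  "min_cost_tree X T \<longleftrightarrow> addition_tree_over X T \<and>
     (\<forall>T'. addition_tree_over X T' \<longrightarrow> cost T \<le> cost T')"

text \<open>A "lambda": a sum of at most N numbers each of the form \<open>\<pm>\<beta>_i\<close> with \<open>0 \<le> i \<le> n\<close>.\<close>
definition is_lambda :: "nat \<Rightarrow> nat \<Rightarrow> (nat \<Rightarrow> real) \<Rightarrow> real \<Rightarrow> bool" where
  "is_lambda N n \<beta> l \<longleftrightarrow> (\<exists>cs :: (bool \<times> nat) list.
      length cs \<le> N \<and> (\<forall>c\<in>set cs. snd c \<le> n) \<and>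
      l = (\<Sum>c\<leftarrow>cs. (if fst c then 1 else -1) * \<beta> (snd c)))"

end

theory Submission
  imports Defs
begin

(* Classify each x in X by thirds x in {1, 0, -3}, so that 3x is within 3h of (thirds x) H.
   Relabelling the leaves of an addition tree by their class gives a tree whose node values N
   satisfy 3v ~ N H for the original node values v, and whose cost, times H, is at most
   3 cost + O(m^2 h).  A node of value (1/3 + lambda) H gets N = 1.  The relabelled Tmin has
   3m leaves 1, m leaves -3, m leaves 0 and total 0; such a tree costs at least 3m, and
   strictly more when an internal node has value 1.  Hence 3 cost Tmin >= (3m + 1) H - O(m^2 h),
   whereas grouping each triple a_(3t+1), a_(3t+2), a_(3t+3) with one -H and one h gives a tree
   of cost at most m H + O(m^2 K).  As H is far larger than m^2 K and m^2 h, z cannot be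
   internal. *)

lemma aval_eq_sum_leaves: "aval t = sum_mset (leaves t)"
  by (induction t) auto

lemma size_leaves_pos: "0 < size (leaves t)"
  by (induction t) auto

lemma leaves_subset_of_node: "u \<in> nodes t \<Longrightarrow> leaves u \<subseteq># leaves t"
  by (induction t) (auto intro: subset_mset.order_trans)

fun relabel :: "(int \<Rightarrow> int) \<Rightarrow> atree \<Rightarrow> atree" where
  "relabel c (Leaf x) = Leaf (c x)"
| "relabel c (Node l r) = Node (relabel c l) (relabel c r)"

lemma leaves_relabel: "leaves (relabel c t) = image_mset c (leaves t)"
  by (induction t) auto

lemma nodes_relabel: "nodes (relabel c t) = relabel c ` nodes t"
  by (induction t) auto

lemma is_leaf_relabel: "is_leaf (relabel c t) \<longleftrightarrow> is_leaf t"
  by (cases t) (auto simp: is_leaf_def)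

lemma abs_aval_relabel_diff_le:
  assumes "\<forall>x\<in>#leaves t. \<bar>p * x - q * c x\<bar> \<le> B"
  shows "\<bar>p * aval t - q * aval (relabel c t)\<bar> \<le> B * int (size (leaves t))"
  using assms
proof (induction t)
  case (Node l r)
  then have "\<bar>p * aval l - q * aval (relabel c l)\<bar> \<le> B * int (size (leaves l))"
    and "\<bar>p * aval r - q * aval (relabel c r)\<bar> \<le> B * int (size (leaves r))"
    by auto
  then show ?case by (simp add: algebra_simps abs_le_iff)
qed simp

lemma cost_relabel_le:
  assumes "\<forall>x\<in>#leaves t. \<bar>p * x - q * c x\<bar> \<le> B" and "0 \<le> p" and "0 \<le> q"
  defines "n \<equiv> int (size (leaves t))"
  shows "q * cost (relabel c t) \<le> p * cost t + B * n * (n - 1)"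
  using assms(1) unfolding n_def
proof (induction t)
  case (Node l r)
  let ?A = "aval (Node l r)" and ?N = "aval (relabel c (Node l r))"
  define nl nr where "nl = int (size (leaves l))" and "nr = int (size (leaves r))"
  obtain x where "x \<in># leaves l"
    using size_leaves_pos[of l] by fastforce
  then have "0 \<le> B"
    using Node.prems by (auto intro: order_trans[OF abs_ge_zero])
  moreover have "1 \<le> nl" "1 \<le> nr"
    using size_leaves_pos unfolding nl_def nr_def by (simp_all add: Suc_le_eq)
  then have "0 \<le> (nl - 1) * nr + (nr - 1) * nl"
    by simp
  ultimately have "B * (nl + nr) \<le> B * (2 * nl * nr)"
    by (intro mult_left_mono) (simp_all add: algebra_simps)
  moreover have "B * (nl + nr) * (nl + nr - 1)
      = B * nl * (nl - 1) + B * nr * (nr - 1) + B * (2 * nl * nr)"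
    by (simp add: algebra_simps)
  moreover have "\<bar>p * ?A - q * ?N\<bar> \<le> B * (nl + nr)"
    using abs_aval_relabel_diff_le[OF Node.prems] by (simp add: nl_def nr_def)
  then have "q * \<bar>?N\<bar> \<le> p * \<bar>?A\<bar> + B * (nl + nr)"
    using abs_triangle_ineq2[of "q * ?N" "p * ?A"] assms(2,3)
    by (simp add: abs_mult abs_minus_commute)
  moreover have "q * cost (relabel c l) \<le> p * cost l + B * nl * (nl - 1)"
    and "q * cost (relabel c r) \<le> p * cost r + B * nr * (nr - 1)"
    using Node unfolding nl_def nr_def by auto
  moreover have "q * cost (relabel c (Node l r))
      = q * \<bar>?N\<bar> + q * cost (relabel c l) + q * cost (relabel c r)"
    and "p * cost (Node l r) = p * \<bar>?A\<bar> + p * cost l + p * cost r"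
    and "int (size (leaves (Node l r))) = nl + nr"
    by (simp_all add: algebra_simps nl_def nr_def)
  ultimately show ?case
    by (simp only:)
qed simp

text \<open>A subtree with value \<open>v\<close>, \<open>k\<close> leaves equal to 1 and none equal to -1 or -2 costs at least
  \<open>k - unit_correction v\<close>: merging subtrees of values \<open>x\<close> and \<open>y\<close> costs \<open>\<bar>x + y\<bar>\<close>,
  which pays for the change of this potential and leaves a unit over when \<open>x + y = 1\<close>.\<close>

definition unit_correction :: "int \<Rightarrow> int" where
  "unit_correction n = (if n = 1 then 1 else if n = -1 \<or> n = -2 then -1 else 0)"

lemma unit_correction_merge:
  "unit_correction x + unit_correction y + of_bool (x + y = 1) \<le> \<bar>x + y\<bar> + unit_correction (x + y)"
  by (auto simp: unit_correction_def)

lemma cost_ge_count_ones: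
  assumes "\<forall>x\<in>#leaves t. x \<noteq> -1 \<and> x \<noteq> -2"
  shows "int (count (leaves t) 1) + of_bool (\<exists>u\<in>nodes t. \<not> is_leaf u \<and> aval u = 1)
           \<le> cost t + unit_correction (aval t)"
  using assms
proof (induction t)
  case (Leaf x)
  then show ?case by (auto simp: is_leaf_def unit_correction_def)
next
  case (Node l r)
  have "(\<exists>u\<in>nodes (Node l r). \<not> is_leaf u \<and> aval u = 1) \<longleftrightarrow> aval l + aval r = 1
      \<or> (\<exists>u\<in>nodes l. \<not> is_leaf u \<and> aval u = 1)
      \<or> (\<exists>u\<in>nodes r. \<not> is_leaf u \<and> aval u = 1)"
    by (auto simp: is_leaf_def)
  then show ?case
    using Node unit_correction_merge[of "aval l" "aval r"]
    by (auto simp: of_bool_def split: if_splits)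
qed

lemma cost_gt_count_ones:
  assumes "\<forall>x\<in>#leaves t. x \<noteq> -1 \<and> x \<noteq> -2" and "aval t = 0"
    and "u \<in> nodes t" and "\<not> is_leaf u" and "aval u = 1"
  shows "int (count (leaves t) 1) < cost t"
proof -
  have "\<exists>u\<in>nodes t. \<not> is_leaf u \<and> aval u = 1"
    using assms(3-5) by blast
  then show ?thesis
    using cost_ge_count_ones[OF assms(1)] assms(2) by (simp add: unit_correction_def)
qed

lemma is_lambda_abs_le:
  fixes B :: real
  assumes "is_lambda N n \<beta> l" and "\<And>i. i \<le> n \<Longrightarrow> \<bar>\<beta> i\<bar> \<le> B"
  shows "\<bar>l\<bar> \<le> N * B"
proof -
  obtain cs where cs: "length cs \<le> N" "\<forall>c\<in>set cs. snd c \<le> n"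
    and l: "l = (\<Sum>c\<leftarrow>cs. (if fst c then 1 else -1) * \<beta> (snd c))"
    using assms(1) unfolding is_lambda_def by blast
  have "\<bar>l\<bar> \<le> (\<Sum>c\<leftarrow>cs. \<bar>(if fst c then 1 else -1) * \<beta> (snd c)\<bar>)"
    unfolding l using sum_list_abs[of "map _ cs"] by (simp add: comp_def)
  also have "\<dots> \<le> (\<Sum>c\<leftarrow>cs. B)"
    using cs(2) assms(2) by (intro sum_list_mono) (simp add: abs_mult)
  also have "\<dots> = length cs * B" by (simp add: sum_list_triv)
  also have "\<dots> \<le> N * B"
    using cs(1) assms(2)[of 0] by (intro mult_right_mono) auto
  finally show ?thesis .
qed

fun left_comb :: "(nat \<Rightarrow> atree) \<Rightarrow> nat \<Rightarrow> atree" where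
  "left_comb g 0 = g 0"
| "left_comb g (Suc k) = Node (left_comb g k) (g (Suc k))"

lemma left_comb_bounds:
  assumes "\<And>i. i \<le> k \<Longrightarrow> \<bar>aval (g i)\<bar> \<le> A \<and> cost (g i) \<le> C"
  shows "\<bar>aval (left_comb g k)\<bar> \<le> int (Suc k) * A \<and>
         cost (left_comb g k) \<le> int (Suc k) * C + int (Suc k)^2 * A"
  using assms
proof (induction k)
  case 0
  then show ?case using abs_ge_zero[of "aval (g 0)"] by force
next
  case (Suc k)
  let ?t = "left_comb g k" and ?s = "g (Suc k)"
  have IH: "\<bar>aval ?t\<bar> \<le> int (Suc k) * A" "cost ?t \<le> int (Suc k) * C + int (Suc k)^2 * A"
    and s: "\<bar>aval ?s\<bar> \<le> A" "cost ?s \<le> C"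
    using Suc by auto
  have "0 \<le> A" using Suc.prems[of 0] by auto
  then have A: "int (Suc k)^2 * A + int (Suc (Suc k)) * A \<le> int (Suc (Suc k))^2 * A"
    by (simp add: algebra_simps power2_eq_square)
  have "\<bar>aval ?t + aval ?s\<bar> \<le> int (Suc (Suc k)) * A"
    using IH(1) s(1) by (simp add: algebra_simps abs_le_iff)
  then show ?case using IH(2) s(2) A by (simp add: algebra_simps)
qed

definition gadget :: "int \<Rightarrow> int \<Rightarrow> int \<Rightarrow> int \<Rightarrow> int \<Rightarrow> atree" where
  "gadget H h x y z = Node (Node (Node (Node (Leaf (-H)) (Leaf x)) (Leaf y)) (Leaf z)) (Leaf h)"

lemma gadget_bounds:
  assumes "H = 3 * W + K + h" and "0 \<le> W" and "0 \<le> h"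
    and "\<And>v. v \<in> {x, y, z} \<Longrightarrow> W < v \<and> 2 * (v - W) < K"
  shows "\<bar>aval (gadget H h x y z)\<bar> \<le> K \<and> cost (gadget H h x y z) \<le> H + 3 * K + 2 * h"
  using assms(1-3) assms(4)[of x] assms(4)[of y] assms(4)[of z]
  by (simp add: gadget_def) linarith

locale three_partition_reduction =
  fixes m K :: nat and b :: "nat \<Rightarrow> int"
    and W L h H :: int and \<epsilon> :: real and a :: "nat \<Rightarrow> int" and \<beta> :: "nat \<Rightarrow> real"
    and X :: "int multiset"
  assumes m_pos: "m > 0" and K_pos: "K > 0"
    and b_bounds: "\<And>i. i \<in> {1..3*m} \<Longrightarrow> real K / 4 < b i \<and> b i < real K / 2"
    and W_def: "W = 100 * (5 * int m)^2 * int K"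
    and a_def: "\<And>i. a i = b i + W"
    and L_def: "L = 3 * W + int K"
    and \<epsilon>_def: "\<epsilon> = 1 / (400 * (5 * real m)^2)"
    and h_def: "h = \<lfloor>4 * \<epsilon> * real_of_int L\<rfloor>"
    and H_def: "H = L + h"
    and \<beta>_0: "\<beta> 0 = real_of_int h / real_of_int H"
    and \<beta>_def: "\<And>i. i \<in> {1..3*m} \<Longrightarrow> \<beta> i = real_of_int (a i) / real_of_int H - 1/3"
    and X_def: "X = mset (map a [1..<3*m+1]) + replicate_mset m (-H) + replicate_mset m h"
begin

lemma W_eq: "W = 2500 * (int m)^2 * int K"
  by (simp add: W_def power_mult_distrib)

lemma h_bounds: "3 * int K \<le> h \<and> h \<le> 4 * int K"
proof -
  have "4 * \<epsilon> * real_of_int L = 3 * real K + real K / (2500 * (real m)^2)"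
    using m_pos by (simp add: \<epsilon>_def L_def W_eq power_mult_distrib field_simps)
  moreover have "1 \<le> 2500 * (real m)^2"
  proof -
    have "1 \<le> (real m)^2" using m_pos by (simp add: Suc_le_eq)
    then show ?thesis by linarith
  qed
  then have "real K / (2500 * (real m)^2) \<le> real K / 1"
    using m_pos by (intro divide_left_mono) auto
  ultimately have "real_of_int (3 * int K) \<le> 4 * \<epsilon> * real_of_int L"
    and "4 * \<epsilon> * real_of_int L < real_of_int (4 * int K) + 1"
    by auto
  then show ?thesis unfolding h_def by (simp add: le_floor_iff floor_le_iff)
qed

lemma H_eq: "H = 7500 * (int m)^2 * int K + int K + h"
  by (simp add: H_def L_def W_eq)

lemma h_pos: "0 < h" and H_pos: "0 < H"
  using h_bounds K_pos H_eq by (auto intro: add_nonneg_pos)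

lemma b_bounds_int: "i \<in> {1..3*m} \<Longrightarrow> int K < 4 * b i \<and> 2 * b i < int K"
  using b_bounds[of i] by linarith

lemma a_bounds: "i \<in> {1..3*m} \<Longrightarrow> W < a i \<and> 2 * (a i - W) < int K"
  using b_bounds_int[of i] a_def[of i] K_pos by simp

lemma a_gt: "i \<in> {1..3*m} \<Longrightarrow> 4 * int K < a i"
proof -
  assume "i \<in> {1..3*m}"
  moreover have "1 \<le> (int m)^2" using m_pos by (simp add: Suc_le_eq)
  then have "1 * int K \<le> (int m)^2 * int K" by (intro mult_right_mono) auto
  ultimately show ?thesis using b_bounds_int[of i] a_def[of i] W_eq by linarith
qed

text \<open>Summed over the leaves below a node, \<open>thirds\<close> gives the integer \<open>N\<close> of the
  decomposition \<open>(N/3 + \<lambda>) H\<close> of the node's value.\<close>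

definition thirds :: "int \<Rightarrow> int" where
  "thirds x = (if x = -H then -3 else if x = h then 0 else 1)"

lemma thirds_a: "i \<in> {1..3*m} \<Longrightarrow> thirds (a i) = 1"
  using a_gt[of i] h_bounds H_pos by (auto simp: thirds_def)

lemma thirds_approx: "x \<in># X \<Longrightarrow> \<bar>3 * x - H * thirds x\<bar> \<le> 3 * h"
proof -
  assume "x \<in># X"
  then have "x \<in> a ` {1..3*m} \<or> x = -H \<or> x = h"
    unfolding X_def
    by (auto simp del: upt_Suc simp: atLeastLessThanSuc_atLeastAtMost split: if_splits)
  then consider i where "i \<in> {1..3*m}" "x = a i" | "x = -H" | "x = h"
    by blast
  then show ?thesis
  proof cases
    case (1 i)
    then show ?thesis
      using b_bounds_int[of i] a_def[of i] thirds_a[of i] h_bounds H_def L_def by auto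
  qed (use h_pos H_pos in \<open>auto simp: thirds_def\<close>)
qed

lemma image_thirds_X:
  "image_mset thirds X = replicate_mset (3*m) 1 + replicate_mset m (-3) + replicate_mset m 0"
proof -
  have "map (thirds \<circ> a) [1..<3*m+1] = map (\<lambda>_. 1) [1..<3*m+1]"
    using thirds_a by (intro map_cong) (auto simp del: upt_Suc)
  then have "map (thirds \<circ> a) [1..<3*m+1] = replicate (3*m) 1"
    by (simp del: upt_Suc add: map_replicate_const)
  moreover have "thirds (-H) = -3" and "thirds h = 0"
    using h_pos H_pos by (auto simp: thirds_def)
  ultimately show ?thesis
    by (simp add: X_def mset_map[symmetric] del: mset_map)
qed

lemma size_X: "size X = 5 * m"
  by (simp add: X_def)

lemma a_in_X: "i \<in> {1..3*m} \<Longrightarrow> a i \<in># X"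
  unfolding X_def by (auto simp del: upt_Suc simp: atLeastLessThanSuc_atLeastAtMost)

lemma \<beta>_abs_le: "i \<le> 3*m \<Longrightarrow> \<bar>\<beta> i\<bar> \<le> real_of_int h / real_of_int H"
proof (cases "i = 0")
  case True
  then show ?thesis using \<beta>_0 h_pos H_pos by simp
next
  case False
  assume "i \<le> 3*m"
  with False have i: "i \<in> {1..3*m}" by simp
  have "\<bar>3 * a i - H\<bar> \<le> 3 * h"
    using thirds_approx[OF a_in_X[OF i]] thirds_a[OF i] by simp
  have "\<beta> i = real_of_int (3 * a i - H) / (3 * real_of_int H)"
    using \<beta>_def[OF i] H_pos by (simp add: field_simps)
  then have "\<bar>\<beta> i\<bar> = \<bar>real_of_int (3 * a i - H)\<bar> / (3 * real_of_int H)"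
    using H_pos by (simp add: abs_divide)
  also have "\<dots> \<le> real_of_int (3 * h) / (3 * real_of_int H)"
    using \<open>\<bar>3 * a i - H\<bar> \<le> 3 * h\<close> H_pos by (intro divide_right_mono) (simp_all flip: of_int_abs)
  also have "\<dots> = real_of_int h / real_of_int H"
    by simp
  finally show ?thesis .
qed

lemma H_large:
  "30 * int m * h < H"
  "15 * int m * h * (5 * int m - 1) + 3 * (int m * (3 * int K + 2 * h + int m * int K)) < H"
proof -
  have "int m * int K \<le> (int m)^2 * int K"
    using m_pos by (simp add: power2_eq_square mult_le_cancel_right1)
  moreover have "int m * h \<le> 4 * (int m * int K)" and "(int m)^2 * h \<le> 4 * ((int m)^2 * int K)"
    using h_bounds mult_left_mono[of h "4 * int K" "int m"] mult_left_mono[of h "4 * int K" "(int m)^2"]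
    by (simp_all add: ac_simps)
  moreover have "15 * int m * h * (5 * int m - 1) + 3 * (int m * (3 * int K + 2 * h + int m * int K))
      = 75 * ((int m)^2 * h) - 9 * (int m * h) + 9 * (int m * int K) + 3 * ((int m)^2 * int K)"
    by (simp add: algebra_simps power2_eq_square)
  moreover have "30 * int m * h = 30 * (int m * h)" and "0 \<le> int m * int K" and "0 \<le> int m * h"
    and "H = 7500 * ((int m)^2 * int K) + int K + h"
    using H_eq h_pos by simp_all
  ultimately show "30 * int m * h < H"
    and "15 * int m * h * (5 * int m - 1) + 3 * (int m * (3 * int K + 2 * h + int m * int K)) < H"
    using h_pos K_pos by linarith+
qed

lemma thirds_of_lambda_node:
  assumes "leaves T = X" and "z \<in> nodes T" and "is_lambda (5*m) (3*m) \<beta> l"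
    and "real_of_int (aval z) = (1/3 + l) * real_of_int H"
  shows "aval (relabel thirds z) = 1"
proof -
  let ?N = "aval (relabel thirds z)"
  have "\<bar>l\<bar> \<le> real (5*m) * (real_of_int h / real_of_int H)"
    using is_lambda_abs_le[OF assms(3) \<beta>_abs_le] .
  then have lH: "\<bar>3 * l * real_of_int H\<bar> \<le> real_of_int (15 * int m * h)"
    using H_pos by (simp add: abs_mult field_simps)
  have "leaves z \<subseteq># X"
    using leaves_subset_of_node[OF assms(2)] assms(1) by simp
  then have "\<bar>3 * aval z - H * ?N\<bar> \<le> 3 * h * int (size (leaves z))"
    using thirds_approx by (intro abs_aval_relabel_diff_le) (auto dest: mset_subset_eqD)
  also have "\<dots> \<le> 3 * h * int (5 * m)"
    using \<open>leaves z \<subseteq># X\<close> size_mset_mono size_X h_pos by (intro mult_left_mono) fastforce+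
  finally have zN: "\<bar>real_of_int (3 * aval z - H * ?N)\<bar> \<le> real_of_int (15 * int m * h)"
    unfolding of_int_abs[symmetric] of_int_le_iff by (simp add: algebra_simps)
  have "real_of_int (3 * aval z - H * ?N) = real_of_int ((1 - ?N) * H) + 3 * l * real_of_int H"
    using assms(4) by (simp add: algebra_simps)
  then have "\<bar>real_of_int ((1 - ?N) * H)\<bar> \<le> real_of_int (30 * int m * h)"
    using lH zN by linarith
  then have "\<bar>1 - ?N\<bar> * H \<le> 30 * int m * h"
    using H_pos unfolding of_int_abs[symmetric] of_int_le_iff by (simp add: abs_mult)
  show ?thesis
  proof (rule ccontr)
    assume "?N \<noteq> 1"
    then have "1 * H \<le> \<bar>1 - ?N\<bar> * H"
      using H_pos by (intro mult_right_mono) auto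
    with \<open>\<bar>1 - ?N\<bar> * H \<le> 30 * int m * h\<close> H_large(1) show False by simp
  qed
qed

lemma cost_ge_if_unit_node:
  assumes "leaves T = X" and "u \<in> nodes T" and "\<not> is_leaf u"
    and "aval (relabel thirds u) = 1"
  shows "3 * (int m * H) + H \<le> 3 * cost T + 15 * int m * h * (5 * int m - 1)"
proof -
  let ?T = "relabel thirds T"
  have leaves: "leaves ?T = replicate_mset (3*m) 1 + replicate_mset m (-3) + replicate_mset m 0"
    using assms(1) image_thirds_X by (simp add: leaves_relabel)
  have "aval ?T = 0"
    unfolding aval_eq_sum_leaves leaves by simp
  moreover have "relabel thirds u \<in> nodes ?T" and "\<not> is_leaf (relabel thirds u)"
    using assms(2,3) by (simp_all add: nodes_relabel is_leaf_relabel)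
  ultimately have "int (count (leaves ?T) 1) < cost ?T"
    using assms(4) by (intro cost_gt_count_ones) (auto simp: leaves)
  then have "3 * int m + 1 \<le> cost ?T"
    unfolding leaves by simp
  then have "H * (3 * int m + 1) \<le> H * cost ?T"
    using H_pos by (intro mult_left_mono) auto
  also have "\<dots> \<le> 3 * cost T + 3 * h * int (5 * m) * (int (5 * m) - 1)"
    using cost_relabel_le[of T 3 H thirds "3 * h"] thirds_approx h_pos H_pos assms(1) size_X
    by auto
  finally show ?thesis
    by (simp add: algebra_simps)
qed

lemma leaves_gadget_comb:
  "leaves (left_comb (\<lambda>t. gadget H h (a (3*t+1)) (a (3*t+2)) (a (3*t+3))) k)
     = mset (map a [1..<3*k+4]) + replicate_mset (Suc k) (-H) + replicate_mset (Suc k) h"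
proof (induction k)
  case 0
  then show ?case by (simp add: gadget_def numeral_eq_Suc upt_rec)
next
  case (Suc k)
  have "[1..<3 * Suc k + 4] = [1..<3*k+4] @ [3*k+4, 3*k+5, 3*k+6]"
    by (simp add: upt_Suc_append[symmetric] numeral_eq_Suc)
  then show ?case
    using Suc by (simp add: gadget_def add_ac numeral_eq_Suc)
qed

lemma min_cost_tree_cost_le:
  assumes "min_cost_tree X T"
  shows "cost T \<le> int m * H + int m * (3 * int K + 2 * h + int m * int K)"
proof -
  let ?g = "\<lambda>t. gadget H h (a (3*t+1)) (a (3*t+2)) (a (3*t+3))"
  let ?T = "left_comb ?g (m - 1)"
  have m: "3 * (m - 1) + 4 = 3 * m + 1" "Suc (m - 1) = m"
    using m_pos by simp_all
  then have "leaves ?T = X"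
    by (simp only: leaves_gadget_comb X_def m)
  then have "cost T \<le> cost ?T"
    using assms unfolding min_cost_tree_def addition_tree_over_def by blast
  also have "cost ?T \<le> int m * (H + 3 * int K + 2 * h) + (int m)^2 * int K"
  proof -
    have "\<bar>aval (?g t)\<bar> \<le> int K \<and> cost (?g t) \<le> H + 3 * int K + 2 * h" if "t \<le> m - 1" for t
    proof (rule gadget_bounds)
      show "H = 3 * W + int K + h" using H_def L_def by simp
      show "0 \<le> W" "0 \<le> h" using W_eq h_pos by simp_all
      show "W < v \<and> 2 * (v - W) < int K" if "v \<in> {a (3*t+1), a (3*t+2), a (3*t+3)}" for v
        using that \<open>t \<le> m - 1\<close> m_pos a_bounds by auto
    qed
    then show ?thesis
      using left_comb_bounds[of "m - 1" ?g "int K" "H + 3 * int K + 2 * h"] m(2)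
      by simp
  qed
  also have "\<dots> = int m * H + int m * (3 * int K + 2 * h + int m * int K)"
    by (simp add: algebra_simps power2_eq_square)
  finally show ?thesis .
qed

end

theorem lemma2p8:
  fixes m K :: nat and b :: "nat \<Rightarrow> int"
    and W L h H :: int and \<epsilon> :: real and a :: "nat \<Rightarrow> int" and \<beta> :: "nat \<Rightarrow> real"
    and X :: "int multiset" and Tmin z :: atree
  assumes "m > 0" and "K > 0"
    and "\<And>i. i \<in> {1..3*m} \<Longrightarrow> b i > 0 \<and> real K / 4 < b i \<and> b i < real K / 2"
    and "(\<Sum>i=1..3*m. b i) = int m * int K"
    and "W = 100 * (5 * int m)^2 * int K"
    and "\<And>i. a i = b i + W"
    and "L = 3 * W + int K"
    and "\<epsilon> = 1 / (400 * (5 * real m)^2)"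
    and "h = \<lfloor>4 * \<epsilon> * real_of_int L\<rfloor>"
    and "H = L + h"
    and "\<beta> 0 = real_of_int h / real_of_int H"
    and "\<And>i. i \<in> {1..3*m} \<Longrightarrow> \<beta> i = real_of_int (a i) / real_of_int H - 1/3"
    and "X = mset (map a [1..<3*m+1]) + replicate_mset m (-H) + replicate_mset m h"
    and "min_cost_tree X Tmin"
    and "z \<in> nodes Tmin"
    and "\<exists>l. is_lambda (5*m) (3*m) \<beta> l \<and> real_of_int (aval z) = (1/3 + l) * real_of_int H"
  shows "is_leaf z"
proof (rule ccontr)
  interpret three_partition_reduction m K b W L h H \<epsilon> a \<beta> X
    using assms(1-3,5-13) by unfold_locales auto
  assume "\<not> is_leaf z"
  have leaves: "leaves Tmin = X"
    using assms(14) by (simp add: min_cost_tree_def addition_tree_over_def)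
  obtain l where "is_lambda (5*m) (3*m) \<beta> l" and "real_of_int (aval z) = (1/3 + l) * real_of_int H"
    using assms(16) by blast
  then have "aval (relabel thirds z) = 1"
    using leaves assms(15) by (intro thirds_of_lambda_node)
  then have "3 * (int m * H) + H \<le> 3 * cost Tmin + 15 * int m * h * (5 * int m - 1)"
    using leaves assms(15) \<open>\<not> is_leaf z\<close> by (intro cost_ge_if_unit_node)
  moreover have "cost Tmin \<le> int m * H + int m * (3 * int K + 2 * h + int m * int K)"
    using assms(14) by (rule min_cost_tree_cost_le)
  ultimately show False
    using H_large(2) by linarith
qed

end
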